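(* Let $\mathcal{X}$ be a countable set, $\mathcal{D}$ a distribution on $\mathcal{X}\times\{0,1\}$, $\alpha,\epsilon>0$, and let $(f_1,f_2)$ be a pair of models output by Reconcile$(f_1^0,f_2^0,\alpha,\epsilon,\mathcal{D})$ for some models $f_1^0,f_2^0:\mathcal{X}\to[0,1]$. Let $E\subseteq\mathcal{X}$ with $\mu(E)>0$ and let $p_j(E)=\mathbb{E}_{(x,y)\sim\mathcal{D}}[f_j(x)\mid x\in E]$ for $j=1,2$. Then $$|p_1(E)-p_2(E)|\le\frac{\alpha}{\mu(E)}+\epsilon.$$
   Context: $\mu(S)=\Pr_{(x,y)\sim\mathcal{D}}[x\in S]$. Brier score $B(f,\mathcal{D})=\mathbb{E}[(f(x)-y)^2]$. $U_\epsilon(f_1,f_2)=\{x:|f_1(x)-f_2(x)|>\epsilon\}$, $U^>_\epsilon$, $U^<_\epsilon$ its subsets where $f_1>f_2$, resp. $f_1<f_2$. Patch: $h(x,f;g,\Delta)=f(x)+\Delta$ if $g(x)=1$, else $f(x)$. $\mathrm{Round}(v;m)$ is a closest point to $v$ in $\{k/m:k\in\mathbb{Z},-m\le k\le m\}$. Algorithm Reconcile$(f_1,f_2,\alpha,\epsilon,\mathcal{D})$: set $m=\lceil \frac{2}{\sqrt{\alpha}\epsilon}\rceil$, $t_1=t_2=0$, $f_1^0=f_1$, $f_2^0=f_2$. While $\mu(U_\epsilon(f_1^{t_1},f_2^{t_2}))\ge\alpha$: for each $\bullet\in\{>,<\}$, $i\in\{1,2\}$ let $v_*^\bullet=\mathbb{E}[y\mid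 x\in U^\bullet_\epsilon(f_1^{t_1},f_2^{t_2})]$, $v_i^\bullet=\mathbb{E}[f_i^{t_i}(x)\mid x\in U^\bullet_\epsilon(f_1^{t_1},f_2^{t_2})]$; choose $(i,\bullet)$ maximizing $\mu(U^\bullet_\epsilon(f_1^{t_1},f_2^{t_2}))(v_*^\bullet-v_i^\bullet)^2$ (product $0$ for mass-zero sets; ties arbitrary); let $g$ be the indicator of that set, $\tilde\Delta=\mathbb{E}[y\mid g=1]-\mathbb{E}[f_i^{t_i}(x)\mid g=1]$, $\Delta=\mathrm{Round}(\tilde\Delta;m)$; set $f_i^{t_i+1}=h(\cdot,f_i^{t_i};g,\Delta)$ and increment $t_i$. On exit, output $(f_1^{t_1},f_2^{t_2})$. *)

theory Defs
  imports "HOL-Probability.Probability"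
begin

text \<open>A distribution D on X x {0,1} is a pmf on 'a x real supported on labels 0/1.
  mu(S) = Pr[x in S].\<close>
definition mu :: "('a \<times> real) pmf \<Rightarrow> 'a set \<Rightarrow> real" where
  "mu D S = measure_pmf.prob D {z. fst z \<in> S}"

text \<open>Conditional expectation E[g(x,y) | x in S] (convention: 0 if mu S = 0).\<close>
definition cond_exp :: "('a \<times> real) pmf \<Rightarrow> 'a set \<Rightarrow> ('a \<times> real \<Rightarrow> real) \<Rightarrow> real" where
  "cond_exp D S g = measure_pmf.expectation D (\<lambda>z. indicator S (fst z) * g z) / mu D S"

definition Brier :: "('a \<Rightarrow> real) \<Rightarrow> ('a \<times> real) pmf \<Rightarrow> real" where
  "Brier f D = measure_pmf.expectation D (\<lambda>z. (f (fst z) - snd z)^2)"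

definition U_gt :: "real \<Rightarrow> ('a \<Rightarrow> real) \<Rightarrow> ('a \<Rightarrow> real) \<Rightarrow> 'a set" where
  "U_gt \<epsilon> f1 f2 = {x. \<bar>f1 x - f2 x\<bar> > \<epsilon> \<and> f1 x > f2 x}"

definition U_lt :: "real \<Rightarrow> ('a \<Rightarrow> real) \<Rightarrow> ('a \<Rightarrow> real) \<Rightarrow> 'a set" where
  "U_lt \<epsilon> f1 f2 = {x. \<bar>f1 x - f2 x\<bar> > \<epsilon> \<and> f1 x < f2 x}"

definition U_eps :: "real \<Rightarrow> ('a \<Rightarrow> real) \<Rightarrow> ('a \<Rightarrow> real) \<Rightarrow> 'a set" where
  "U_eps \<epsilon> f1 f2 = {x. \<bar>f1 x - f2 x\<bar> > \<epsilon>}"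

definition patch :: "('a \<Rightarrow> real) \<Rightarrow> ('a \<Rightarrow> bool) \<Rightarrow> real \<Rightarrow> 'a \<Rightarrow> real" where
  "patch f g \<Delta> x = (if g x then f x + \<Delta> else f x)"

definition grid :: "nat \<Rightarrow> real set" where
  "grid m = {of_int k / of_nat m | k. - int m \<le> k \<and> k \<le> int m}"

text \<open>r is a (possibly non-unique) valid value of Round(v;m).\<close>
definition is_round :: "real \<Rightarrow> nat \<Rightarrow> real \<Rightarrow> bool" where
  "is_round v m r \<longleftrightarrow> r \<in> grid m \<and> (\<forall>r'\<in>grid m. \<bar>r - v\<bar> \<le> \<bar>r' - v\<bar>)"

text \<open>The set U^bullet (b = True means '>', b = False means '<').\<close>
definition Uset :: "real \<Rightarrow> ('a \<Rightarrow> real) \<Rightarrow> ('a \<Rightarrow> real) \<Rightarrow> bool \<Rightarrow> 'a set" where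
  "Uset \<epsilon> f1 f2 b = (if b then U_gt \<epsilon> f1 f2 else U_lt \<epsilon> f1 f2)"

definition sel :: "nat \<Rightarrow> ('a \<Rightarrow> real) \<Rightarrow> ('a \<Rightarrow> real) \<Rightarrow> ('a \<Rightarrow> real)" where
  "sel i f1 f2 = (if i = 1 then f1 else f2)"

definition score :: "('a \<times> real) pmf \<Rightarrow> real \<Rightarrow> ('a \<Rightarrow> real) \<Rightarrow> ('a \<Rightarrow> real) \<Rightarrow> nat \<Rightarrow> bool \<Rightarrow> real" where
  "score D \<epsilon> f1 f2 i b =
     (let S = Uset \<epsilon> f1 f2 b in
      if mu D S = 0 then 0
      else mu D S * (cond_exp D S snd - cond_exp D S (\<lambda>z. sel i f1 f2 (fst z)))^2)"

definition reconcile_m :: "real \<Rightarrow> real \<Rightarrow> nat" where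
  "reconcile_m \<alpha> \<epsilon> = nat \<lceil>2 / (sqrt \<alpha> * \<epsilon>)\<rceil>"

text \<open>One iteration of the while loop of Reconcile (nondeterministic in ties and rounding).
  The counters t_1, t_2 are irrelevant to the output and omitted.\<close>
definition reconcile_step ::
  "('a \<times> real) pmf \<Rightarrow> real \<Rightarrow> real \<Rightarrow>
   (('a \<Rightarrow> real) \<times> ('a \<Rightarrow> real)) \<Rightarrow> (('a \<Rightarrow> real) \<times> ('a \<Rightarrow> real)) \<Rightarrow> bool" where
  "reconcile_step D \<alpha> \<epsilon> st st' \<longleftrightarrow>
     (let f1 = fst st; f2 = snd st in
      mu D (U_eps \<epsilon> f1 f2) \<ge> \<alpha> \<and>
      (\<exists>i b \<Delta>. i \<in> {1,2} \<and>
         (\<forall>i'\<in>{1,2}. \<forall>b'. score D \<epsilon> f1 f2 i' b' \<le> score D \<epsilon> f1 f2 i b) \<and>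
         (let S = Uset \<epsilon> f1 f2 b;
              \<Delta>t = cond_exp D S snd - cond_exp D S (\<lambda>z. sel i f1 f2 (fst z)) in
          is_round \<Delta>t (reconcile_m \<alpha> \<epsilon>) \<Delta> \<and>
          st' = (if i = 1 then (patch f1 (\<lambda>x. x \<in> S) \<Delta>, f2)
                 else (f1, patch f2 (\<lambda>x. x \<in> S) \<Delta>)))))"

definition reconcile_output ::
  "('a \<times> real) pmf \<Rightarrow> real \<Rightarrow> real \<Rightarrow> ('a \<Rightarrow> real) \<Rightarrow> ('a \<Rightarrow> real) \<Rightarrow>
   ('a \<Rightarrow> real) \<Rightarrow> ('a \<Rightarrow> real) \<Rightarrow> bool" where
  "reconcile_output D \<alpha> \<epsilon> f1 f2 g1 g2 \<longleftrightarrow>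
     (reconcile_step D \<alpha> \<epsilon>)\<^sup>*\<^sup>* (f1, f2) (g1, g2) \<and> \<not> (mu D (U_eps \<epsilon> g1 g2) \<ge> \<alpha>)"

end

theory Submission
  imports Defs
begin

text \<open>
  When Reconcile halts, the two models differ by more than \<open>\<epsilon>\<close> only on a set of mass
  below \<open>\<alpha>\<close>, so it suffices that they never differ by more than 1 anywhere. This is a loop
  invariant: the greedy choice of \<open>(i, \<bullet>)\<close> means the label mean \<open>v\<^sub>*\<close> on \<open>U\<^sup>\<bullet>\<close> is at
  least as far from \<open>v\<^sub>i\<close> as from the other model's mean, and since the models are strictly
  ordered on \<open>U\<^sup>\<bullet>\<close>, the patch moves \<open>f\<^sub>i\<close> towards the other model there. Rounding to the
  grid keeps the sign of the patch and makes it at most 1 in size. Conditioning on \<open>E\<close> then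
  bounds the gap of the means by \<open>\<mu>(U\<^sub>\<epsilon>)/\<mu>(E) + \<epsilon>\<close>.
\<close>

lemma closer_to_lower_below_upper:
  fixes a b c :: real
  assumes "a < b" and "(c - a)^2 \<le> (c - b)^2"
  shows "c < b"
proof -
  have "(b - a) * (2 * c - a - b) \<le> 0"
    using assms(2) by (simp add: power2_eq_square algebra_simps)
  then show ?thesis
    using assms(1) by (simp add: mult_le_0_iff)
qed

lemma closer_to_upper_above_lower:
  fixes a b c :: real
  assumes "a < b" and "(c - b)^2 \<le> (c - a)^2"
  shows "a < c"
  using closer_to_lower_below_upper[of "-b" "-a" "-c"] assms
  by (simp add: power2_commute)

lemma abs_add_le_of_mult_nonpos:
  fixes d e c :: real
  assumes "\<bar>d\<bar> \<le> c" and "\<bar>e\<bar> \<le> c" and "d * e \<le> 0"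
  shows "\<bar>d + e\<bar> \<le> c"
  using assms by (auto simp: abs_le_iff mult_le_0_iff)

lemma zero_mem_grid: "0 \<in> grid m"
  unfolding grid_def by force

lemma abs_le_one_of_mem_grid:
  assumes "r \<in> grid m"
  shows "\<bar>r\<bar> \<le> 1"
proof -
  obtain k where k: "- int m \<le> k" "k \<le> int m" and r: "r = of_int k / of_nat m"
    using assms unfolding grid_def by blast
  have "\<bar>real_of_int k\<bar> \<le> real m"
    using k by linarith
  then show ?thesis
    unfolding r by (cases "m = 0") auto
qed

lemma is_round_abs_le_one: "is_round v m r \<Longrightarrow> \<bar>r\<bar> \<le> 1"
  unfolding is_round_def using abs_le_one_of_mem_grid by blast

lemma is_round_dist_le_abs: "is_round v m r \<Longrightarrow> \<bar>r - v\<bar> \<le> \<bar>v\<bar>"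
  unfolding is_round_def using zero_mem_grid by force

lemma is_round_nonpos: "is_round v m r \<Longrightarrow> v \<le> 0 \<Longrightarrow> r \<le> 0"
  using is_round_dist_le_abs by fastforce

lemma is_round_nonneg: "is_round v m r \<Longrightarrow> v \<ge> 0 \<Longrightarrow> r \<ge> 0"
  using is_round_dist_le_abs by fastforce

lemma mu_eq_expectation:
  "mu D S = measure_pmf.expectation D (\<lambda>z. indicator S (fst z))"
proof -
  have indicator_fst: "(\<lambda>z. indicator S (fst z) :: real) = indicator {z. fst z \<in> S}"
    by (auto simp: indicator_def)
  show ?thesis
    unfolding mu_def indicator_fst by simp
qed

lemma integrable_cond_exp_integrand:
  fixes D :: "('a \<times> real) pmf" and h :: "'a \<Rightarrow> real"
  assumes "bounded (range h)"
  shows "integrable (measure_pmf D) (\<lambda>z. indicator S (fst z) * h (fst z))"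
proof -
  obtain B where B: "\<And>x. \<bar>h x\<bar> \<le> B"
    using assms by (auto simp: bounded_real)
  show ?thesis
    by (rule measure_pmf.integrable_const_bound[where B = B])
       (auto simp: indicator_def B intro: order_trans[OF _ B])
qed

lemma cond_exp_diff:
  fixes D :: "('a \<times> real) pmf" and h k :: "'a \<Rightarrow> real"
  assumes "bounded (range h)" "bounded (range k)"
  shows "cond_exp D S (\<lambda>z. h (fst z) - k (fst z))
       = cond_exp D S (\<lambda>z. h (fst z)) - cond_exp D S (\<lambda>z. k (fst z))"
  using integrable_cond_exp_integrand[OF assms(1)] integrable_cond_exp_integrand[OF assms(2)]
  by (simp add: cond_exp_def right_diff_distrib diff_divide_distrib)

lemma cond_exp_pos:
  fixes D :: "('a \<times> real) pmf" and h :: "'a \<Rightarrow> real"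
  assumes "mu D S > 0" and "bounded (range h)" and pos: "\<And>x. x \<in> S \<Longrightarrow> h x > 0"
  shows "cond_exp D S (\<lambda>z. h (fst z)) > 0"
proof -
  let ?F = "\<lambda>z. indicator S (fst z) * h (fst z)"
  obtain z where z: "z \<in> set_pmf D" "fst z \<in> S"
    using assms(1) measure_pmf_zero_iff[of D "{z. fst z \<in> S}"] by (auto simp: mu_def)
  have nonneg: "\<And>z. ?F z \<ge> 0"
    by (simp add: indicator_def less_imp_le pos)
  have "measure_pmf.expectation D ?F \<noteq> 0"
  proof
    assume "measure_pmf.expectation D ?F = 0"
    then have "AE z in measure_pmf D. ?F z = 0"
      using integral_nonneg_eq_0_iff_AE[OF integrable_cond_exp_integrand[OF assms(2)]] nonneg
      by blast
    then show False
      using z pos[OF z(2)] by (auto simp: AE_measure_pmf_iff)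
  qed
  moreover have "measure_pmf.expectation D ?F \<ge> 0"
    by (rule integral_nonneg_AE) (simp add: nonneg)
  ultimately have "measure_pmf.expectation D ?F > 0"
    by linarith
  then show ?thesis
    using assms(1) by (simp add: cond_exp_def)
qed

lemma cond_exp_strict_mono:
  fixes D :: "('a \<times> real) pmf" and h k :: "'a \<Rightarrow> real"
  assumes "mu D S > 0" and "bounded (range h)" "bounded (range k)"
    and "\<And>x. x \<in> S \<Longrightarrow> k x < h x"
  shows "cond_exp D S (\<lambda>z. k (fst z)) < cond_exp D S (\<lambda>z. h (fst z))"
  using cond_exp_pos[of D S "\<lambda>x. h x - k x"] cond_exp_diff[of h k D S]
    bounded_minus_comp[of h UNIV k] assms
  by simp

lemma score_eq:
  "score D \<epsilon> f1 f2 i b = mu D (Uset \<epsilon> f1 f2 b) *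
     (cond_exp D (Uset \<epsilon> f1 f2 b) snd - cond_exp D (Uset \<epsilon> f1 f2 b) (\<lambda>z. sel i f1 f2 (fst z)))^2"
  unfolding score_def Let_def by simp

lemma rounded_patch_opposes_gap:
  fixes D :: "('a \<times> real) pmf" and h k :: "'a \<Rightarrow> real" and S :: "'a set"
  defines "v \<equiv> cond_exp D S snd"
    and "ch \<equiv> cond_exp D S (\<lambda>z. h (fst z))" and "ck \<equiv> cond_exp D S (\<lambda>z. k (fst z))"
  assumes bounded: "bounded (range h)" "bounded (range k)"
    and sign: "(\<forall>x\<in>S. k x < h x) \<or> (\<forall>x\<in>S. h x < k x)"
    and greedy: "mu D S * (v - ck)^2 \<le> mu D S * (v - ch)^2"
    and round: "is_round (v - ch) m \<Delta>"
    and "x \<in> S"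
  shows "(h x - k x) * \<Delta> \<le> 0"
proof (cases "mu D S = 0")
  case True
  \<comment> \<open>conditioning on a null set divides by zero, so the rounded patch is 0\<close>
  then have "v - ch = 0"
    by (simp add: v_def ch_def cond_exp_def)
  then have "\<Delta> = 0"
    using is_round_nonpos[OF round] is_round_nonneg[OF round] by simp
  then show ?thesis
    by simp
next
  case False
  then have pos: "mu D S > 0"
    by (simp add: mu_def order_less_le)
  then have closer: "(v - ck)^2 \<le> (v - ch)^2"
    using greedy by simp
  from sign show ?thesis
  proof
    assume "\<forall>x\<in>S. k x < h x"
    then have "ck < ch"
      unfolding ch_def ck_def using cond_exp_strict_mono[OF pos bounded] by blast
    then have "v < ch"
      using closer_to_lower_below_upper closer by blast
    then have "\<Delta> \<le> 0"
      using is_round_nonpos[OF round] by simp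
    with \<open>\<forall>x\<in>S. k x < h x\<close> \<open>x \<in> S\<close> show ?thesis
      by (simp add: mult_nonneg_nonpos less_imp_le)
  next
    assume "\<forall>x\<in>S. h x < k x"
    then have "ch < ck"
      unfolding ch_def ck_def using cond_exp_strict_mono[OF pos bounded(2,1)] by blast
    then have "ch < v"
      using closer_to_upper_above_lower closer by blast
    then have "\<Delta> \<ge> 0"
      using is_round_nonneg[OF round] by simp
    with \<open>\<forall>x\<in>S. h x < k x\<close> \<open>x \<in> S\<close> show ?thesis
      by (simp add: mult_nonpos_nonneg less_imp_le)
  qed
qed

definition close_models :: "('a \<Rightarrow> real) \<Rightarrow> ('a \<Rightarrow> real) \<Rightarrow> bool" where
  "close_models f1 f2 \<longleftrightarrow>
     bounded (range f1) \<and> bounded (range f2) \<and> (\<forall>x. \<bar>f1 x - f2 x\<bar> \<le> 1)"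

lemma close_models_commute: "close_models f1 f2 \<longleftrightarrow> close_models f2 f1"
  unfolding close_models_def by (auto simp: abs_minus_commute)

lemma close_models_unit_interval:
  assumes "\<forall>x. f1 x \<in> {0..1}" and "\<forall>x. f2 x \<in> {0..1}"
  shows "close_models f1 f2"
proof -
  have "bounded (range f)" if "\<forall>x. f x \<in> {0..1}" for f :: "'a \<Rightarrow> real"
    using that by (intro bounded_subset[OF bounded_cbox[of 0 1]]) auto
  moreover have "\<bar>f1 x - f2 x\<bar> \<le> 1" for x
    using assms[THEN spec[of _ x]] by (simp add: abs_le_iff)
  ultimately show ?thesis
    using assms unfolding close_models_def by blast
qed

lemma bounded_range_patch:
  assumes "bounded (range f)"
  shows "bounded (range (patch f g \<Delta>))"
proof -
  obtain B where B: "\<And>x. \<bar>f x\<bar> \<le> B"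
    using assms by (auto simp: bounded_real)
  have "\<bar>patch f g \<Delta> x\<bar> \<le> B + \<bar>\<Delta>\<bar>" for x
    using B[of x] abs_triangle_ineq[of "f x" \<Delta>] unfolding patch_def by (cases "g x") auto
  then show ?thesis
    by (auto simp: bounded_real)
qed

lemma close_models_patch:
  assumes "close_models h k" and "\<bar>\<Delta>\<bar> \<le> 1" and "\<forall>x\<in>S. (h x - k x) * \<Delta> \<le> 0"
  shows "close_models (patch h (\<lambda>x. x \<in> S) \<Delta>) k"
proof -
  have "\<bar>patch h (\<lambda>x. x \<in> S) \<Delta> x - k x\<bar> \<le> 1" for x
    using assms abs_add_le_of_mult_nonpos[of "h x - k x" 1 \<Delta>]
    unfolding close_models_def patch_def by (simp add: algebra_simps)
  then show ?thesis
    using assms(1) bounded_range_patch unfolding close_models_def by blast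
qed

lemma reconcile_step_preserves_close_models:
  assumes step: "reconcile_step D \<alpha> \<epsilon> (g1, g2) (g1', g2')" and close: "close_models g1 g2"
  shows "close_models g1' g2'"
proof -
  obtain i b \<Delta> where i: "i \<in> {1, 2}"
    and greedy: "\<forall>i'\<in>{1, 2}. \<forall>b'. score D \<epsilon> g1 g2 i' b' \<le> score D \<epsilon> g1 g2 i b"
    and round: "is_round (cond_exp D (Uset \<epsilon> g1 g2 b) snd
      - cond_exp D (Uset \<epsilon> g1 g2 b) (\<lambda>z. sel i g1 g2 (fst z))) (reconcile_m \<alpha> \<epsilon>) \<Delta>"
    and new: "(g1', g2') = (if i = 1 then (patch g1 (\<lambda>x. x \<in> Uset \<epsilon> g1 g2 b) \<Delta>, g2)
      else (g1, patch g2 (\<lambda>x. x \<in> Uset \<epsilon> g1 g2 b) \<Delta>))"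
    using step unfolding reconcile_step_def Let_def fst_conv snd_conv by blast
  define S where "S = Uset \<epsilon> g1 g2 b"
  have sign: "(\<forall>x\<in>S. g2 x < g1 x) \<or> (\<forall>x\<in>S. g1 x < g2 x)"
    by (cases b) (auto simp: S_def Uset_def U_gt_def U_lt_def)
  have bounded: "bounded (range g1)" "bounded (range g2)"
    using close unfolding close_models_def by auto
  have small: "\<bar>\<Delta>\<bar> \<le> 1"
    using is_round_abs_le_one[OF round] .
  show ?thesis
  proof (cases "i = 1")
    case True
    have "\<forall>x\<in>S. (g1 x - g2 x) * \<Delta> \<le> 0"
      using rounded_patch_opposes_gap[OF bounded sign] greedy[rule_format, of 2 b] round True
      by (simp add: score_eq sel_def S_def)
    then show ?thesis
      using close_models_patch[OF close small] new True by (simp add: S_def)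
  next
    case False
    have "\<forall>x\<in>S. (g2 x - g1 x) * \<Delta> \<le> 0"
      using rounded_patch_opposes_gap[OF bounded(2,1)] sign greedy[rule_format, of 1 b] round
        False i
      by (simp add: score_eq sel_def S_def disj_commute)
    then show ?thesis
      using close_models_patch[of g2 g1] close small new False
      by (simp add: S_def close_models_commute)
  qed
qed

lemma reconcile_reachable_close_models:
  assumes "(reconcile_step D \<alpha> \<epsilon>)\<^sup>*\<^sup>* (f1, f2) (g1, g2)" and "close_models f1 f2"
  shows "close_models g1 g2"
  using assms
  by (induction rule: rtranclp_induct2) (auto intro: reconcile_step_preserves_close_models)

lemma abs_cond_exp_diff_le:
  fixes D :: "('a \<times> real) pmf"
  assumes close: "close_models f1 f2" and pos: "mu D E > 0" and "\<epsilon> \<ge> 0"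
  shows "\<bar>cond_exp D E (\<lambda>z. f1 (fst z)) - cond_exp D E (\<lambda>z. f2 (fst z))\<bar>
           \<le> mu D (U_eps \<epsilon> f1 f2) / mu D E + \<epsilon>"
proof -
  define U where "U = U_eps \<epsilon> f1 f2"
  define d where "d = (\<lambda>x. f1 x - f2 x)"
  have bounded: "bounded (range f1)" "bounded (range f2)" "bounded (range d)"
    using close bounded_minus_comp unfolding close_models_def d_def by auto
  have integrable_indicator: "integrable (measure_pmf D) (\<lambda>z. indicator A (fst z) :: real)" for A
    using integrable_cond_exp_integrand[of "\<lambda>_. 1"] by simp
  have "\<bar>measure_pmf.expectation D (\<lambda>z. indicator E (fst z) * d (fst z))\<bar>
      \<le> measure_pmf.expectation D (\<lambda>z. \<bar>indicator E (fst z) * d (fst z)\<bar>)"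
    by (rule integral_abs_bound)
  also have "\<dots> \<le> measure_pmf.expectation D (\<lambda>z. indicator U (fst z) + \<epsilon> * indicator E (fst z))"
  proof (rule integral_mono)
    show "integrable (measure_pmf D) (\<lambda>z. \<bar>indicator E (fst z) * d (fst z)\<bar>)"
      using integrable_cond_exp_integrand[OF bounded(3)] by simp
    show "integrable (measure_pmf D) (\<lambda>z. indicator U (fst z) + \<epsilon> * indicator E (fst z))"
      using integrable_indicator by simp
    have d_le: "\<bar>d x\<bar> \<le> 1" for x
      using close unfolding close_models_def d_def by blast
    show "\<bar>indicator E (fst z) * d (fst z)\<bar> \<le> indicator U (fst z) + \<epsilon> * indicator E (fst z)"
      for z :: "'a \<times> real"
      using d_le[of "fst z"] \<open>\<epsilon> \<ge> 0\<close> by (auto simp: U_def U_eps_def d_def indicator_def)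
  qed
  also have "\<dots> = mu D U + \<epsilon> * mu D E"
    using integrable_indicator by (simp add: mu_eq_expectation)
  finally have "\<bar>cond_exp D E (\<lambda>z. d (fst z))\<bar> \<le> (mu D U + \<epsilon> * mu D E) / mu D E"
    using pos by (simp add: cond_exp_def divide_right_mono)
  also have "\<dots> = mu D U / mu D E + \<epsilon>"
    using pos by (simp add: add_divide_distrib)
  finally show ?thesis
    using cond_exp_diff[OF bounded(1,2)] by (simp add: U_def d_def)
qed

theorem corollary1:
  fixes D :: "('a::countable \<times> real) pmf"
    and f10 f20 f1 f2 :: "'a \<Rightarrow> real"
    and \<alpha> \<epsilon> :: real and E :: "'a set"
  assumes labels: "\<forall>z\<in>set_pmf D. snd z \<in> {0, 1}"
    and alpha_pos: "\<alpha> > 0" and eps_pos: "\<epsilon> > 0"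
    and f10_range: "\<forall>x. f10 x \<in> {0..1}" and f20_range: "\<forall>x. f20 x \<in> {0..1}"
    and out: "reconcile_output D \<alpha> \<epsilon> f10 f20 f1 f2"
    and E_pos: "mu D E > 0"
  shows "\<bar>cond_exp D E (\<lambda>z. f1 (fst z)) - cond_exp D E (\<lambda>z. f2 (fst z))\<bar>
           \<le> \<alpha> / mu D E + \<epsilon>"
proof -
  have reachable: "(reconcile_step D \<alpha> \<epsilon>)\<^sup>*\<^sup>* (f10, f20) (f1, f2)"
    and halted: "mu D (U_eps \<epsilon> f1 f2) < \<alpha>"
    using out unfolding reconcile_output_def by auto
  have "close_models f1 f2"
    using reconcile_reachable_close_models[OF reachable]
      close_models_unit_interval[OF f10_range f20_range] .
  then have "\<bar>cond_exp D E (\<lambda>z. f1 (fst z)) - cond_exp D E (\<lambda>z. f2 (fst z))\<bar>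
      \<le> mu D (U_eps \<epsilon> f1 f2) / mu D E + \<epsilon>"
    by (intro abs_cond_exp_diff_le E_pos less_imp_le[OF eps_pos])
  also have "\<dots> \<le> \<alpha> / mu D E + \<epsilon>"
    using halted E_pos by (simp add: divide_right_mono)
  finally show ?thesis .
qed

end
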